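(* Let $G$ be a simple stochastic game and $A$ a subset of the arcs of $G$. A positional MAX strategy $\sigma$ is optimal in $G$ if and only if it is optimal in $G[A,\sigma]$.
   Context: A simple stochastic game (SSG) $G$ is a finite directed graph whose vertex set is partitioned into MAX vertices, MIN vertices, random vertices and a nonempty set of sinks; every non-sink vertex has at least one outgoing arc, every sink has exactly one outgoing arc, a self-loop; each random vertex $x$ carries a rational probability distribution $p_x$ on its out-neighbourhood, positive on every out-neighbour; each sink $s$ has rational value $\mathrm{Val}(s)\in[0,1]$. A positional MAX (resp. MIN) strategy assigns to each MAX (resp. MIN) vertex one of its out-neighbours. Under $\sigma,\tau$ from start $x_0$, the random play moves from MAX vertex $x$ to $\sigma(x)$, from MIN vertex $x$ to $\tau(x)$, from random vertex $x$ to an out-neighbour drawn by $p_x$ independently, and stays at a sink once reached; its value is $\mathrm{Val}(s)$ if it reaches sink $s$, else $0$, and $v^G_{\sigma,\tau}(x_0)$ is its expectation. A best response to $\sigma$ is a positional MIN strategy $\tau$ with $v_{\sigma,\tau}\le v_{\sigma,\tau'}$ pointwise for all MIN strategies $\tau'$ (one exists), and $v^G_\sigma:=v^G_{\sigma,\tau}$ for such $\tau$. A positional MAX strategy $\sigma$ is optimal in $G$ if $v^G_\sigma\ge v^G_{\sigma''}$ pointwise for every positional MAX strategy $\sigma''$. Transformed game: for a set $A$ of arcs of $G$, $G[A,\sigma]$ is obtained from a copy of $G$ by replacing each arc $e=(x,y)\in A$ by an arc $(x,s_e)$ to a new sink $s_e$ of value $v^G_\sigma(y)$ (for random $x$, $p_x(s_e)=p_x(y)$);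 $y$ is kept. Strategies of $G$ and $G[A,\sigma]$ are identified (a MAX vertex $x$ with $\sigma(x)=y$, $(x,y)\in A$, moves to $s_{(x,y)}$). *)

theory Defs
  imports Complex_Main
begin

record 'v ssg =
  Vmax  :: "'v set"
  Vmin  :: "'v set"
  Vrand :: "'v set"
  Vsink :: "'v set"
  arcs  :: "('v \<times> 'v) set"
  prob  :: "'v \<Rightarrow> 'v \<Rightarrow> real"
  sval  :: "'v \<Rightarrow> real"

definition verts :: "('v, 'a) ssg_scheme \<Rightarrow> 'v set" where
  "verts G = Vmax G \<union> Vmin G \<union> Vrand G \<union> Vsink G"

definition outn :: "('v, 'a) ssg_scheme \<Rightarrow> 'v \<Rightarrow> 'v set" where
  "outn G x = {y. (x, y) \<in> arcs G}"

definition is_ssg :: "('v, 'a) ssg_scheme \<Rightarrow> bool" where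
  "is_ssg G \<longleftrightarrow>
     finite (verts G) \<and>
     Vmax G \<inter> Vmin G = {} \<and> Vmax G \<inter> Vrand G = {} \<and> Vmax G \<inter> Vsink G = {} \<and>
     Vmin G \<inter> Vrand G = {} \<and> Vmin G \<inter> Vsink G = {} \<and> Vrand G \<inter> Vsink G = {} \<and>
     Vsink G \<noteq> {} \<and>
     arcs G \<subseteq> verts G \<times> verts G \<and>
     (\<forall>x \<in> verts G - Vsink G. outn G x \<noteq> {}) \<and>
     (\<forall>s \<in> Vsink G. outn G s = {s}) \<and>
     (\<forall>x \<in> Vrand G. (\<forall>y \<in> outn G x. prob G x y > 0 \<and> prob G x y \<in> \<rat>) \<and>
                    (\<Sum>y \<in> outn G x. prob G x y) = 1) \<and>
     (\<forall>s \<in> Vsink G. sval G s \<in> \<rat> \<and> 0 \<le> sval G s \<and> sval G s \<le> 1)"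

text \<open>Positional strategies (only their values on MAX resp. MIN vertices matter).\<close>
definition max_strategy :: "('v, 'a) ssg_scheme \<Rightarrow> ('v \<Rightarrow> 'v) \<Rightarrow> bool" where
  "max_strategy G \<sigma> \<longleftrightarrow> (\<forall>x \<in> Vmax G. (x, \<sigma> x) \<in> arcs G)"

definition min_strategy :: "('v, 'a) ssg_scheme \<Rightarrow> ('v \<Rightarrow> 'v) \<Rightarrow> bool" where
  "min_strategy G \<tau> \<longleftrightarrow> (\<forall>x \<in> Vmin G. (x, \<tau> x) \<in> arcs G)"

text \<open>\<open>play_iter G \<sigma> \<tau> n x\<close> is the expected payoff of the random play from \<open>x\<close>
  stopped after \<open>n\<close> steps, i.e. the sum over sinks \<open>s\<close> of \<open>Val(s)\<close> times the
  probability that the play is in \<open>s\<close> at time \<open>n\<close> (sinks are absorbing).\<close>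
fun play_iter :: "('v, 'a) ssg_scheme \<Rightarrow> ('v \<Rightarrow> 'v) \<Rightarrow> ('v \<Rightarrow> 'v) \<Rightarrow> nat \<Rightarrow> 'v \<Rightarrow> real" where
  "play_iter G \<sigma> \<tau> 0 x = (if x \<in> Vsink G then sval G x else 0)"
| "play_iter G \<sigma> \<tau> (Suc n) x =
     (if x \<in> Vsink G then sval G x
      else if x \<in> Vmax G then play_iter G \<sigma> \<tau> n (\<sigma> x)
      else if x \<in> Vmin G then play_iter G \<sigma> \<tau> n (\<tau> x)
      else (\<Sum>y \<in> outn G x. prob G x y * play_iter G \<sigma> \<tau> n y))"

text \<open>The value \<open>v_{\<sigma>,\<tau>}(x)\<close>: expectation of \<open>Val(s)\<close> if the play reaches sink \<open>s\<close>,
  \<open>0\<close> otherwise; equals the limit (supremum) of the \<open>n\<close>-step values.\<close>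
definition play_value :: "('v, 'a) ssg_scheme \<Rightarrow> ('v \<Rightarrow> 'v) \<Rightarrow> ('v \<Rightarrow> 'v) \<Rightarrow> 'v \<Rightarrow> real" where
  "play_value G \<sigma> \<tau> x = (SUP n. play_iter G \<sigma> \<tau> n x)"

definition best_response :: "('v, 'a) ssg_scheme \<Rightarrow> ('v \<Rightarrow> 'v) \<Rightarrow> ('v \<Rightarrow> 'v) \<Rightarrow> bool" where
  "best_response G \<sigma> \<tau> \<longleftrightarrow> min_strategy G \<tau> \<and>
     (\<forall>\<tau>'. min_strategy G \<tau>' \<longrightarrow> (\<forall>x \<in> verts G. play_value G \<sigma> \<tau> x \<le> play_value G \<sigma> \<tau>' x))"

definition val_sigma :: "('v, 'a) ssg_scheme \<Rightarrow> ('v \<Rightarrow> 'v) \<Rightarrow> 'v \<Rightarrow> real" where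
  "val_sigma G \<sigma> x = play_value G \<sigma> (SOME \<tau>. best_response G \<sigma> \<tau>) x"

definition optimal :: "('v, 'a) ssg_scheme \<Rightarrow> ('v \<Rightarrow> 'v) \<Rightarrow> bool" where
  "optimal G \<sigma> \<longleftrightarrow> max_strategy G \<sigma> \<and>
     (\<forall>\<sigma>''. max_strategy G \<sigma>'' \<longrightarrow> (\<forall>x \<in> verts G. val_sigma G \<sigma>'' x \<le> val_sigma G \<sigma> x))"

text \<open>Vertices of \<open>G[A,\<sigma>]\<close>: \<open>Inl x\<close> is the copy of vertex \<open>x\<close>, \<open>Inr e\<close> is the new
  sink \<open>s_e\<close>. Self-loops of sinks in \<open>A\<close> are ignored (sinks stay sinks).\<close>
definition eff_arcs :: "('v, 'a) ssg_scheme \<Rightarrow> ('v \<times> 'v) set \<Rightarrow> ('v \<times> 'v) set" where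
  "eff_arcs G A = {e \<in> A. fst e \<notin> Vsink G}"

definition transform :: "('v, 'a) ssg_scheme \<Rightarrow> ('v \<times> 'v) set \<Rightarrow> ('v \<Rightarrow> 'v)
                         \<Rightarrow> ('v + ('v \<times> 'v)) ssg" where
  "transform G A \<sigma> =
    (let A' = eff_arcs G A in
     \<lparr> Vmax = Inl ` Vmax G, Vmin = Inl ` Vmin G, Vrand = Inl ` Vrand G,
       Vsink = Inl ` Vsink G \<union> Inr ` A',
       arcs = {(Inl x, Inl y) | x y. (x, y) \<in> arcs G - A'}
              \<union> {(Inl x, Inr (x, y)) | x y. (x, y) \<in> A'}
              \<union> {(Inr e, Inr e) | e. e \<in> A'},
       prob = (\<lambda>u w. case (u, w) of
                 (Inl x, Inl y) \<Rightarrow> prob G x y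
               | (Inl x, Inr (x', y)) \<Rightarrow> (if x' = x then prob G x y else 0)
               | _ \<Rightarrow> 0),
       sval = (\<lambda>u. case u of Inl s \<Rightarrow> sval G s | Inr (x, y) \<Rightarrow> val_sigma G \<sigma> y) \<rparr>)"

definition lift_strategy :: "('v, 'a) ssg_scheme \<Rightarrow> ('v \<times> 'v) set \<Rightarrow> ('v \<Rightarrow> 'v)
                             \<Rightarrow> ('v + ('v \<times> 'v)) \<Rightarrow> ('v + ('v \<times> 'v))" where
  "lift_strategy G A \<sigma> u = (case u of
      Inl x \<Rightarrow> (if (x, \<sigma> x) \<in> eff_arcs G A then Inr (x, \<sigma> x) else Inl (\<sigma> x))
    | Inr e \<Rightarrow> Inr e)"

end

theory Submission
  imports Defs "HOL-Library.FuncSet"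
begin

(* Call \<sigma> locally optimal if no arc (x, y) leaving a MAX vertex has v\<^sub>\<sigma>(y) > v\<^sub>\<sigma>(x).
   A positional \<sigma> is optimal iff it is locally optimal: switching \<sigma> along such an arc
   strictly improves it, and conversely a locally optimal v\<^sub>\<sigma> is a supersolution of the
   one-step equations of every MAX strategy played against a best response to \<sigma>.
   Both directions rest on a comparison principle on the finite vertex set: nonnegative
   supersolutions dominate v\<^sub>\<sigma>\<^sub>,\<^sub>\<tau>, and subsolutions that are nonpositive somewhere on
   every sink-free set closed under the play are dominated by it.
   In G[A,\<sigma>] the lifted \<sigma> has value v\<^sub>\<sigma> again, the new sink s\<^sub>e of e = (x, y) standing
   in for y with value v\<^sub>\<sigma>(y). So local optimality reads the same in both games. *)

text \<open>\<open>is_ssg\<close> without the rationality conditions: the sinks of \<open>G[A,\<sigma>]\<close> carry the values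
  \<open>v\<^sub>\<sigma>(y)\<close>, whose rationality is irrelevant here.\<close>
definition wf_game :: "('v, 'a) ssg_scheme \<Rightarrow> bool" where
  "wf_game G \<longleftrightarrow>
     finite (verts G) \<and>
     Vmax G \<inter> Vmin G = {} \<and> Vmax G \<inter> Vrand G = {} \<and> Vmax G \<inter> Vsink G = {} \<and>
     Vmin G \<inter> Vrand G = {} \<and> Vmin G \<inter> Vsink G = {} \<and> Vrand G \<inter> Vsink G = {} \<and>
     Vsink G \<noteq> {} \<and>
     arcs G \<subseteq> verts G \<times> verts G \<and>
     (\<forall>x \<in> verts G - Vsink G. outn G x \<noteq> {}) \<and>
     (\<forall>s \<in> Vsink G. outn G s = {s}) \<and>
     (\<forall>x \<in> Vrand G. (\<forall>y \<in> outn G x. prob G x y > 0) \<and> (\<Sum>y \<in> outn G x. prob G x y) = 1) \<and>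
     (\<forall>s \<in> Vsink G. 0 \<le> sval G s \<and> sval G s \<le> 1)"

lemma is_ssg_imp_wf_game: "is_ssg G \<Longrightarrow> wf_game G"
  unfolding is_ssg_def wf_game_def by (elim conjE) (intro conjI; (assumption | fast))

context
  fixes H :: "('v, 'a) ssg_scheme"
  assumes H: "wf_game H"
begin

lemma finite_verts: "finite (verts H)"
  using H by (simp add: wf_game_def)

lemma kinds_disjoint:
  "Vmax H \<inter> Vmin H = {}" "Vmax H \<inter> Vrand H = {}" "Vmax H \<inter> Vsink H = {}"
  "Vmin H \<inter> Vrand H = {}" "Vmin H \<inter> Vsink H = {}" "Vrand H \<inter> Vsink H = {}"
  using H unfolding wf_game_def by auto

lemma arcs_subset_verts: "arcs H \<subseteq> verts H \<times> verts H"
  using H by (simp add: wf_game_def)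

lemma outn_subset_verts: "outn H x \<subseteq> verts H"
  using arcs_subset_verts unfolding outn_def by blast

lemma finite_outn: "finite (outn H x)"
  using outn_subset_verts finite_verts finite_subset by metis

lemma outn_nonempty: "x \<in> verts H \<Longrightarrow> x \<notin> Vsink H \<Longrightarrow> outn H x \<noteq> {}"
  using H unfolding wf_game_def by blast

lemma outn_sink: "s \<in> Vsink H \<Longrightarrow> outn H s = {s}"
  using H unfolding wf_game_def by blast

lemma sval_bounds: "s \<in> Vsink H \<Longrightarrow> 0 \<le> sval H s \<and> sval H s \<le> 1"
  using H unfolding wf_game_def by blast

lemma prob_pos: "x \<in> Vrand H \<Longrightarrow> y \<in> outn H x \<Longrightarrow> 0 < prob H x y"
  using H unfolding wf_game_def by blast

lemma sum_prob: "x \<in> Vrand H \<Longrightarrow> (\<Sum>y \<in> outn H x. prob H x y) = 1"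
  using H unfolding wf_game_def by blast

lemma random_or_outside:
  assumes "x \<notin> Vsink H" "x \<notin> Vmax H" "x \<notin> Vmin H"
  obtains "x \<in> Vrand H" | "outn H x = {}"
  using assms arcs_subset_verts unfolding verts_def outn_def by blast

lemma prob_nonneg:
  assumes "x \<notin> Vsink H" "x \<notin> Vmax H" "x \<notin> Vmin H" "y \<in> outn H x"
  shows "0 \<le> prob H x y"
  using assms by (cases rule: random_or_outside) (auto dest: prob_pos)

end

definition next_exp ::
    "('v, 'a) ssg_scheme \<Rightarrow> ('v \<Rightarrow> 'v) \<Rightarrow> ('v \<Rightarrow> 'v) \<Rightarrow> ('v \<Rightarrow> real) \<Rightarrow> 'v \<Rightarrow> real" where
  "next_exp H \<sigma> \<tau> f x =
     (if x \<in> Vmax H then f (\<sigma> x) else if x \<in> Vmin H then f (\<tau> x)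
      else (\<Sum>y \<in> outn H x. prob H x y * f y))"

definition bellman ::
    "('v, 'a) ssg_scheme \<Rightarrow> ('v \<Rightarrow> 'v) \<Rightarrow> ('v \<Rightarrow> 'v) \<Rightarrow> ('v \<Rightarrow> real) \<Rightarrow> 'v \<Rightarrow> real" where
  "bellman H \<sigma> \<tau> f x = (if x \<in> Vsink H then sval H x else next_exp H \<sigma> \<tau> f x)"

lemma play_iter_Suc_bellman: "play_iter H \<sigma> \<tau> (Suc n) = bellman H \<sigma> \<tau> (play_iter H \<sigma> \<tau> n)"
  by (auto simp: bellman_def next_exp_def)

lemma next_exp_diff: "next_exp H \<sigma> \<tau> (\<lambda>z. f z - g z) x = next_exp H \<sigma> \<tau> f x - next_exp H \<sigma> \<tau> g x"
  by (simp add: next_exp_def right_diff_distrib sum_subtractf)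

lemma bellman_tendsto:
  "(\<And>y. (\<lambda>n. F n y) \<longlonglongrightarrow> f y) \<Longrightarrow> (\<lambda>n. bellman H \<sigma> \<tau> (F n) x) \<longlonglongrightarrow> bellman H \<sigma> \<tau> f x"
  unfolding bellman_def next_exp_def by (auto intro!: tendsto_intros)

lemma bellman_cong_max: "(z \<in> Vmax H \<Longrightarrow> \<sigma> z = \<sigma>' z) \<Longrightarrow> bellman H \<sigma> \<tau> f z = bellman H \<sigma>' \<tau> f z"
  by (auto simp: bellman_def next_exp_def)

lemma bellman_cong_min: "(z \<in> Vmin H \<Longrightarrow> \<tau> z = \<tau>' z) \<Longrightarrow> bellman H \<sigma> \<tau> f z = bellman H \<sigma> \<tau>' f z"
  by (auto simp: bellman_def next_exp_def)

lemma play_value_cong_min: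
  assumes "\<And>x. x \<in> Vmin H \<Longrightarrow> \<tau> x = \<tau>' x"
  shows "play_value H \<sigma> \<tau> = play_value H \<sigma> \<tau>'"
proof -
  have "play_iter H \<sigma> \<tau> n x = play_iter H \<sigma> \<tau>' n x" for n x
    using assms by (induction n arbitrary: x) auto
  then show ?thesis by (intro ext) (simp add: play_value_def)
qed

context
  fixes H :: "('v, 'a) ssg_scheme"
  assumes H: "wf_game H"
begin

lemma next_exp_mono:
  assumes "x \<notin> Vsink H" "\<And>y. f y \<le> g y"
  shows "next_exp H \<sigma> \<tau> f x \<le> next_exp H \<sigma> \<tau> g x"
  using assms prob_nonneg[OF H, of x] unfolding next_exp_def
  by (auto intro!: sum_mono mult_left_mono)

lemma bellman_mono: "(\<And>y. f y \<le> g y) \<Longrightarrow> bellman H \<sigma> \<tau> f x \<le> bellman H \<sigma> \<tau> g x"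
  using next_exp_mono by (simp add: bellman_def)

lemma next_exp_nonneg: "x \<notin> Vsink H \<Longrightarrow> (\<And>y. 0 \<le> f y) \<Longrightarrow> 0 \<le> next_exp H \<sigma> \<tau> f x"
  using prob_nonneg[OF H, of x] unfolding next_exp_def by (auto intro!: sum_nonneg)

lemma next_exp_le_const:
  assumes "x \<notin> Vsink H" "\<And>y. f y \<le> c" "0 \<le> c"
  shows "next_exp H \<sigma> \<tau> f x \<le> c"
proof -
  have "next_exp H \<sigma> \<tau> f x \<le> next_exp H \<sigma> \<tau> (\<lambda>_. c) x"
    using assms by (intro next_exp_mono)
  also have "\<dots> \<le> c"
  proof (cases "x \<in> Vmax H \<or> x \<in> Vmin H")
    case False
    with assms(1) show ?thesis
      by (cases rule: random_or_outside[OF H])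
        (auto simp: next_exp_def sum_prob[OF H] sum_distrib_right[symmetric] assms(3))
  qed (auto simp: next_exp_def)
  finally show ?thesis .
qed

lemma play_iter_bounds: "0 \<le> play_iter H \<sigma> \<tau> n x \<and> play_iter H \<sigma> \<tau> n x \<le> 1"
proof (induction n arbitrary: x)
  case 0
  then show ?case using sval_bounds[OF H] by simp
next
  case (Suc n)
  then show ?case
    using sval_bounds[OF H] next_exp_nonneg next_exp_le_const[of x "play_iter H \<sigma> \<tau> n" 1]
    by (simp add: play_iter_Suc_bellman bellman_def)
qed

lemma incseq_play_iter: "incseq (\<lambda>n. play_iter H \<sigma> \<tau> n x)"
proof -
  have "play_iter H \<sigma> \<tau> n x \<le> play_iter H \<sigma> \<tau> (Suc n) x" for n
  proof (induction n arbitrary: x)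
    case 0
    show ?case
      using play_iter_bounds next_exp_nonneg[of x "play_iter H \<sigma> \<tau> 0"]
      by (simp only: play_iter_Suc_bellman bellman_def) simp
  next
    case (Suc n)
    then show ?case
      unfolding play_iter_Suc_bellman[of H \<sigma> \<tau> "Suc n"] play_iter_Suc_bellman[of H \<sigma> \<tau> n]
      by (intro bellman_mono) (simp add: play_iter_Suc_bellman)
  qed
  then show ?thesis by (rule incseq_SucI)
qed

lemma play_iter_LIMSEQ: "(\<lambda>n. play_iter H \<sigma> \<tau> n x) \<longlonglongrightarrow> play_value H \<sigma> \<tau> x"
  unfolding play_value_def
  using play_iter_bounds by (intro LIMSEQ_incseq_SUP incseq_play_iter bdd_aboveI2[where M=1]) auto

lemma play_value_bounds: "0 \<le> play_value H \<sigma> \<tau> x \<and> play_value H \<sigma> \<tau> x \<le> 1"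
  using play_iter_LIMSEQ play_iter_bounds by (meson LIMSEQ_le_const LIMSEQ_le_const2)

lemma play_value_bellman: "bellman H \<sigma> \<tau> (play_value H \<sigma> \<tau>) x = play_value H \<sigma> \<tau> x"
proof -
  have "(\<lambda>n. play_iter H \<sigma> \<tau> (Suc n) x) \<longlonglongrightarrow> bellman H \<sigma> \<tau> (play_value H \<sigma> \<tau>) x"
    unfolding play_iter_Suc_bellman by (intro bellman_tendsto play_iter_LIMSEQ)
  moreover have "(\<lambda>n. play_iter H \<sigma> \<tau> (Suc n) x) \<longlonglongrightarrow> play_value H \<sigma> \<tau> x"
    using play_iter_LIMSEQ LIMSEQ_Suc by blast
  ultimately show ?thesis using LIMSEQ_unique by blast
qed

lemma play_value_le_supersolution:
  assumes "\<And>x. 0 \<le> u x" "\<And>x. bellman H \<sigma> \<tau> u x \<le> u x"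
  shows "play_value H \<sigma> \<tau> x \<le> u x"
proof -
  have "play_iter H \<sigma> \<tau> n x \<le> u x" for n
  proof (induction n arbitrary: x)
    case 0
    then show ?case using assms[of x] by (auto simp: bellman_def split: if_splits)
  next
    case (Suc n)
    then show ?case
      unfolding play_iter_Suc_bellman using bellman_mono assms(2) order_trans by metis
  qed
  then show ?thesis unfolding play_value_def by (intro cSUP_least) auto
qed

end

section \<open>A comparison principle\<close>

definition moves :: "('v, 'a) ssg_scheme \<Rightarrow> ('v \<Rightarrow> 'v) \<Rightarrow> ('v \<Rightarrow> 'v) \<Rightarrow> 'v \<Rightarrow> 'v set" where
  "moves H \<sigma> \<tau> x = (if x \<in> Vmax H then {\<sigma> x} else if x \<in> Vmin H then {\<tau> x} else outn H x)"

definition play_closed :: "('v, 'a) ssg_scheme \<Rightarrow> ('v \<Rightarrow> 'v) \<Rightarrow> ('v \<Rightarrow> 'v) \<Rightarrow> 'v set \<Rightarrow> bool" where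
  "play_closed H \<sigma> \<tau> C \<longleftrightarrow> C \<subseteq> verts H \<and> (\<forall>z \<in> C - Vsink H. moves H \<sigma> \<tau> z \<subseteq> C)"

lemma next_exp_cong_moves:
  "(\<And>y. y \<in> moves H \<sigma> \<tau> x \<Longrightarrow> f y = g y) \<Longrightarrow> next_exp H \<sigma> \<tau> f x = next_exp H \<sigma> \<tau> g x"
  by (auto simp: next_exp_def moves_def intro!: sum.cong)

lemma weighted_mean_ge_Max_imp_eq:
  fixes p f :: "'b \<Rightarrow> real"
  assumes "finite S" "\<And>y. y \<in> S \<Longrightarrow> 0 < p y" "sum p S = 1" "\<And>y. y \<in> S \<Longrightarrow> f y \<le> m"
    and "m \<le> (\<Sum>y\<in>S. p y * f y)" "y \<in> S"
  shows "f y = m"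
proof (rule ccontr)
  assume "f y \<noteq> m"
  with assms have "(\<Sum>y\<in>S. p y * f y) < (\<Sum>y\<in>S. p y * m)"
    by (intro sum_strict_mono_ex1) (auto intro!: mult_left_mono mult_strict_left_mono less_imp_le
        simp: order.strict_iff_order)
  also have "\<dots> = m" using assms(3) by (simp add: sum_distrib_right[symmetric])
  finally show False using assms(5) by simp
qed

context
  fixes H :: "('v, 'a) ssg_scheme"
  assumes H: "wf_game H"
begin

lemma finite_play_closed: "play_closed H \<sigma> \<tau> C \<Longrightarrow> finite C"
  using finite_verts[OF H] finite_subset unfolding play_closed_def by blast

lemma verts_play_closed:
  assumes "max_strategy H \<sigma>" "min_strategy H \<tau>"
  shows "play_closed H \<sigma> \<tau> (verts H)"
  using assms arcs_subset_verts[OF H] outn_subset_verts[OF H]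
  unfolding play_closed_def moves_def max_strategy_def min_strategy_def by auto

lemma play_value_play_closed:
  assumes "play_closed H \<sigma> \<tau> C" "C \<inter> Vsink H = {}" "x \<in> C"
  shows "play_value H \<sigma> \<tau> x = 0"
proof -
  have "play_iter H \<sigma> \<tau> n x = 0" if "x \<in> C" for n x
    using that
  proof (induction n arbitrary: x)
    case (Suc n)
    have "moves H \<sigma> \<tau> x \<subseteq> C" using Suc.prems assms(1,2) unfolding play_closed_def by blast
    then have "next_exp H \<sigma> \<tau> (play_iter H \<sigma> \<tau> n) x = next_exp H \<sigma> \<tau> (\<lambda>_. 0) x"
      by (intro next_exp_cong_moves Suc.IH) blast
    then show ?case
      using Suc.prems assms(2) by (auto simp: play_iter_Suc_bellman bellman_def next_exp_def)
  qed (use assms(2) in auto)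
  then show ?thesis using assms(3) by (simp add: play_value_def)
qed

lemma argmax_play_closed:
  assumes C: "play_closed H \<sigma> \<tau> C" "C \<noteq> {}"
    and sub: "\<And>z. z \<in> C \<Longrightarrow> z \<notin> Vsink H \<Longrightarrow> d z \<le> next_exp H \<sigma> \<tau> d z"
  defines "D \<equiv> {z \<in> C. d z = Max (d ` C)}"
  shows "D \<noteq> {} \<and> play_closed H \<sigma> \<tau> D"
proof
  let ?m = "Max (d ` C)"
  have fin: "finite C" by (rule finite_play_closed[OF C(1)])
  have le_m: "d z \<le> ?m" if "z \<in> C" for z using fin that by simp
  show "D \<noteq> {}" using Max_in[of "d ` C"] fin C(2) unfolding D_def by fastforce
  have "moves H \<sigma> \<tau> z \<subseteq> D" if z: "z \<in> D" "z \<notin> Vsink H" for z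
  proof
    fix y assume y: "y \<in> moves H \<sigma> \<tau> z"
    have zC: "z \<in> C" and dz: "d z = ?m" using z by (auto simp: D_def)
    have moves_C: "moves H \<sigma> \<tau> z \<subseteq> C" using C(1) zC z(2) by (auto simp: play_closed_def)
    with y have yC: "y \<in> C" by blast
    have "d y = ?m"
    proof (cases "z \<in> Vmax H \<or> z \<in> Vmin H")
      case True
      then show ?thesis
        using sub[OF zC z(2)] le_m[OF yC] dz y kinds_disjoint(1)[OF H]
        by (auto simp: next_exp_def moves_def split: if_splits)
    next
      case False
      then have "z \<in> Vrand H"
        using C(1) zC z(2) y by (cases rule: random_or_outside[OF H]) (auto simp: moves_def)
      then show ?thesis
        using False y sub[OF zC z(2)] dz le_m moves_C
        by (intro weighted_mean_ge_Max_imp_eq[of "outn H z" "prob H z" d])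
           (auto simp: finite_outn[OF H] prob_pos[OF H] sum_prob[OF H] next_exp_def moves_def)
    qed
    then show "y \<in> D" using yC by (simp add: D_def)
  qed
  then show "play_closed H \<sigma> \<tau> D" using C(1) by (auto simp: play_closed_def D_def)
qed

text \<open>A maximum principle: the difference \<open>u - v\<^sub>\<sigma>\<^sub>,\<^sub>\<tau>\<close> attains its maximum on a
  closed set, which must either meet a sink, where the difference is at most \<open>0\<close>, or be sink-free,
  where \<open>u \<le> 0 \<le> v\<^sub>\<sigma>\<^sub>,\<^sub>\<tau>\<close> somewhere.\<close>
lemma subsolution_le_play_value:
  assumes \<sigma>: "max_strategy H \<sigma>" and \<tau>: "min_strategy H \<tau>"
    and sub: "\<And>z. z \<in> verts H \<Longrightarrow> u z \<le> bellman H \<sigma> \<tau> u z"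
    and trap: "\<And>C. C \<noteq> {} \<Longrightarrow> play_closed H \<sigma> \<tau> C \<Longrightarrow> C \<inter> Vsink H = {} \<Longrightarrow> \<exists>z\<in>C. u z \<le> 0"
    and x: "x \<in> verts H"
  shows "u x \<le> play_value H \<sigma> \<tau> x"
proof (rule ccontr)
  define d where "d = (\<lambda>z. u z - play_value H \<sigma> \<tau> z)"
  define D where "D = {z \<in> verts H. d z = Max (d ` verts H)}"
  assume "\<not> ?thesis"
  then have "0 < d x" by (simp add: d_def)
  also have "d x \<le> Max (d ` verts H)" using finite_verts[OF H] x by simp
  finally have max_pos: "0 < Max (d ` verts H)" .
  have "d z \<le> next_exp H \<sigma> \<tau> d z" if "z \<in> verts H" "z \<notin> Vsink H" for z
    using sub[OF that(1)] play_value_bellman[OF H, of \<sigma> \<tau> z] that(2)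
    unfolding d_def next_exp_diff by (simp add: bellman_def)
  with argmax_play_closed[OF verts_play_closed[OF \<sigma> \<tau>]] x
  have D: "D \<noteq> {}" "play_closed H \<sigma> \<tau> D" unfolding D_def by blast+
  have "D \<inter> Vsink H = {}"
  proof -
    have "d z \<le> 0" if "z \<in> D" "z \<in> Vsink H" for z
      using sub[of z] play_value_bellman[OF H, of \<sigma> \<tau> z] that by (auto simp: D_def d_def bellman_def)
    then show ?thesis using max_pos by (force simp: D_def)
  qed
  then obtain z where "z \<in> D" "u z \<le> 0" using trap D by blast
  then show False using play_value_bounds[OF H, of \<sigma> \<tau> z] max_pos by (auto simp: D_def d_def)
qed

end

section \<open>Existence of best responses\<close>

definition total_value :: "('v, 'a) ssg_scheme \<Rightarrow> ('v \<Rightarrow> 'v) \<Rightarrow> ('v \<Rightarrow> 'v) \<Rightarrow> real" where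
  "total_value H \<sigma> \<tau> = (\<Sum>x \<in> verts H. play_value H \<sigma> \<tau> x)"

text \<open>A MIN strategy minimising the total value is a best response: any strategy doing at
  least as well everywhere and strictly better somewhere would lower the total value.\<close>
context
  fixes H :: "('v, 'a) ssg_scheme" and \<sigma> \<tau>\<^sub>0 :: "'v \<Rightarrow> 'v"
  assumes H: "wf_game H" and \<sigma>: "max_strategy H \<sigma>" and \<tau>\<^sub>0: "min_strategy H \<tau>\<^sub>0"
    and minimal: "\<And>\<tau>. min_strategy H \<tau> \<Longrightarrow> total_value H \<sigma> \<tau>\<^sub>0 \<le> total_value H \<sigma> \<tau>"
begin

lemma min_total_value_no_strict_improvement:
  assumes "min_strategy H \<tau>" "\<And>z. play_value H \<sigma> \<tau> z \<le> play_value H \<sigma> \<tau>\<^sub>0 z" "x \<in> verts H"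
  shows "\<not> play_value H \<sigma> \<tau> x < play_value H \<sigma> \<tau>\<^sub>0 x"
proof
  assume "play_value H \<sigma> \<tau> x < play_value H \<sigma> \<tau>\<^sub>0 x"
  with assms have "total_value H \<sigma> \<tau> < total_value H \<sigma> \<tau>\<^sub>0"
    unfolding total_value_def by (intro sum_strict_mono_ex1 finite_verts[OF H]) auto
  with minimal[OF assms(1)] show False by simp
qed

lemma min_total_value_Vmin_le_succ:
  assumes x: "x \<in> Vmin H" and y: "y \<in> outn H x"
  shows "play_value H \<sigma> \<tau>\<^sub>0 x \<le> play_value H \<sigma> \<tau>\<^sub>0 y"
proof (rule ccontr)
  let ?w = "play_value H \<sigma> \<tau>\<^sub>0"
  define \<tau> where "\<tau> = \<tau>\<^sub>0(x := y)"
  assume "\<not> ?thesis"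
  then have lt: "?w y < ?w x" by simp
  have x_kind: "x \<notin> Vmax H" "x \<notin> Vsink H" using x kinds_disjoint[OF H] by auto
  have \<tau>_min: "min_strategy H \<tau>" using \<tau>\<^sub>0 y by (auto simp: min_strategy_def \<tau>_def outn_def)
  have le: "play_value H \<sigma> \<tau> z \<le> ?w z" for z
  proof (rule play_value_le_supersolution[OF H])
    show "0 \<le> ?w z" for z using play_value_bounds[OF H] by blast
    show "bellman H \<sigma> \<tau> ?w z \<le> ?w z" for z
    proof (cases "z = x")
      case True
      then show ?thesis using lt x_kind x by (simp add: bellman_def next_exp_def \<tau>_def)
    next
      case False
      then have "bellman H \<sigma> \<tau> ?w z = bellman H \<sigma> \<tau>\<^sub>0 ?w z"
        by (intro bellman_cong_min) (simp add: \<tau>_def)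
      then show ?thesis using play_value_bellman[OF H] by simp
    qed
  qed
  have "play_value H \<sigma> \<tau> x = play_value H \<sigma> \<tau> y"
    using play_value_bellman[OF H, of \<sigma> \<tau> x] x_kind x
    by (simp add: bellman_def next_exp_def \<tau>_def)
  also have "\<dots> < ?w x" using le[of y] lt by simp
  finally show False
    using min_total_value_no_strict_improvement[OF \<tau>_min le] x by (auto simp: verts_def)
qed

lemma min_total_value_nonpos_on_closed:
  assumes \<tau>: "min_strategy H \<tau>" and C: "C \<noteq> {}" "play_closed H \<sigma> \<tau> C" "C \<inter> Vsink H = {}"
  shows "\<exists>z\<in>C. play_value H \<sigma> \<tau>\<^sub>0 z \<le> 0"
proof (rule ccontr)
  let ?w = "play_value H \<sigma> \<tau>\<^sub>0"
  define \<tau>' where "\<tau>' z = (if z \<in> C then \<tau> z else \<tau>\<^sub>0 z)" for z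
  define w' where "w' z = (if z \<in> C then 0 else ?w z)" for z
  assume "\<not> ?thesis"
  then have pos: "0 < ?w z" if "z \<in> C" for z using that by force
  have \<tau>'_min: "min_strategy H \<tau>'" using \<tau> \<tau>\<^sub>0 by (auto simp: min_strategy_def \<tau>'_def)
  have moves_eq: "moves H \<sigma> \<tau>' z = moves H \<sigma> \<tau> z" if "z \<in> C" for z
    using that by (simp add: moves_def \<tau>'_def)
  have C': "play_closed H \<sigma> \<tau>' C" using C(2) moves_eq by (simp add: play_closed_def)
  have w'_le: "w' z \<le> ?w z" for z using play_value_bounds[OF H] by (simp add: w'_def)
  have le: "play_value H \<sigma> \<tau>' z \<le> w' z" for z
  proof (rule play_value_le_supersolution[OF H])
    show "0 \<le> w' z" for z using play_value_bounds[OF H] by (simp add: w'_def)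
    show "bellman H \<sigma> \<tau>' w' z \<le> w' z" for z
    proof (cases "z \<in> C")
      case True
      then have "moves H \<sigma> \<tau>' z \<subseteq> C" "z \<notin> Vsink H" using C' C(3) by (auto simp: play_closed_def)
      then have "next_exp H \<sigma> \<tau>' w' z = next_exp H \<sigma> \<tau>' (\<lambda>_. 0) z"
        by (intro next_exp_cong_moves) (auto simp: w'_def)
      then show ?thesis using \<open>z \<notin> Vsink H\<close> True by (simp add: bellman_def next_exp_def w'_def)
    next
      case False
      have "bellman H \<sigma> \<tau>' w' z \<le> bellman H \<sigma> \<tau>' ?w z" by (rule bellman_mono[OF H w'_le])
      also have "\<dots> = bellman H \<sigma> \<tau>\<^sub>0 ?w z" using False by (intro bellman_cong_min) (simp add: \<tau>'_def)
      finally show ?thesis using False play_value_bellman[OF H] by (simp add: w'_def)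
    qed
  qed
  obtain z where z: "z \<in> C" using C(1) by blast
  have "play_value H \<sigma> \<tau>' z < ?w z"
    using play_value_play_closed[OF H C' C(3) z] pos[OF z] by simp
  then show False
    using min_total_value_no_strict_improvement[OF \<tau>'_min] le w'_le order_trans z C(2)
    by (meson play_closed_def subsetD)
qed

lemma min_total_value_best_response: "best_response H \<sigma> \<tau>\<^sub>0"
  unfolding best_response_def
proof (intro conjI \<tau>\<^sub>0 allI impI ballI)
  fix \<tau> x assume \<tau>: "min_strategy H \<tau>" and x: "x \<in> verts H"
  let ?w = "play_value H \<sigma> \<tau>\<^sub>0"
  show "?w x \<le> play_value H \<sigma> \<tau> x"
  proof (rule subsolution_le_play_value[OF H \<sigma> \<tau> _ min_total_value_nonpos_on_closed[OF \<tau>] x])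
    fix z
    show "?w z \<le> bellman H \<sigma> \<tau> ?w z"
    proof (cases "z \<in> Vmin H")
      case True
      then have "z \<notin> Vmax H" "z \<notin> Vsink H" "\<tau> z \<in> outn H z"
        using kinds_disjoint[OF H] \<tau> by (auto simp: min_strategy_def outn_def)
      then show ?thesis using min_total_value_Vmin_le_succ[OF True] True by (simp add: bellman_def next_exp_def)
    next
      case False
      then show ?thesis using play_value_bellman[OF H, of \<sigma> \<tau>\<^sub>0 z] bellman_cong_min[of z H \<tau> \<tau>\<^sub>0] by simp
    qed
  qed
qed

end

lemma best_response_exists:
  assumes H: "wf_game H" and \<sigma>: "max_strategy H \<sigma>"
  shows "\<exists>\<tau>. best_response H \<sigma> \<tau>"
proof -
  define T where "T = Pi\<^sub>E (Vmin H) (outn H)"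
  have "finite T"
    unfolding T_def using finite_verts[OF H] finite_outn[OF H] by (intro finite_PiE) (auto simp: verts_def)
  moreover have "T \<noteq> {}"
  proof -
    have "outn H x \<noteq> {}" if "x \<in> Vmin H" for x
    proof (rule outn_nonempty[OF H])
      show "x \<in> verts H" using that by (simp add: verts_def)
      show "x \<notin> Vsink H" using that kinds_disjoint(5)[OF H] by blast
    qed
    then show ?thesis by (simp add: T_def PiE_eq_empty_iff)
  qed
  ultimately obtain \<tau>\<^sub>0 where \<tau>\<^sub>0: "\<tau>\<^sub>0 \<in> T"
    and min_T: "\<And>\<tau>. \<tau> \<in> T \<Longrightarrow> total_value H \<sigma> \<tau>\<^sub>0 \<le> total_value H \<sigma> \<tau>"
    using ex_is_arg_min_if_finite[of T "total_value H \<sigma>"] by (auto simp: is_arg_min_linorder)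
  have T_min: "min_strategy H \<tau>" if "\<tau> \<in> T" for \<tau>
    using that by (auto simp: T_def min_strategy_def outn_def)
  have "total_value H \<sigma> \<tau>\<^sub>0 \<le> total_value H \<sigma> \<tau>" if "min_strategy H \<tau>" for \<tau>
  proof -
    have "restrict \<tau> (Vmin H) \<in> T" using that by (auto simp: T_def min_strategy_def outn_def)
    moreover have "total_value H \<sigma> (restrict \<tau> (Vmin H)) = total_value H \<sigma> \<tau>"
      unfolding total_value_def by (subst play_value_cong_min[of H "restrict \<tau> (Vmin H)" \<tau>]) auto
    ultimately show ?thesis using min_T by fastforce
  qed
  then show ?thesis using min_total_value_best_response[OF H \<sigma> T_min[OF \<tau>\<^sub>0]] by blast
qed

section \<open>Optimality is a local condition\<close>

definition some_best_response :: "('v, 'a) ssg_scheme \<Rightarrow> ('v \<Rightarrow> 'v) \<Rightarrow> 'v \<Rightarrow> 'v" where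
  "some_best_response H \<sigma> = (SOME \<tau>. best_response H \<sigma> \<tau>)"

definition locally_optimal :: "('v, 'a) ssg_scheme \<Rightarrow> ('v \<Rightarrow> 'v) \<Rightarrow> bool" where
  "locally_optimal H \<sigma> \<longleftrightarrow> (\<forall>x \<in> Vmax H. \<forall>y \<in> outn H x. val_sigma H \<sigma> y \<le> val_sigma H \<sigma> x)"

lemma val_sigma_eq_play_value: "val_sigma H \<sigma> = play_value H \<sigma> (some_best_response H \<sigma>)"
  unfolding val_sigma_def some_best_response_def by (intro ext) simp

context
  fixes H :: "('v, 'a) ssg_scheme"
  assumes H: "wf_game H"
begin

lemma val_sigma_bounds: "0 \<le> val_sigma H \<sigma> x \<and> val_sigma H \<sigma> x \<le> 1"
  unfolding val_sigma_eq_play_value by (rule play_value_bounds[OF H])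

lemma val_sigma_bellman:
  "bellman H \<sigma> (some_best_response H \<sigma>) (val_sigma H \<sigma>) x = val_sigma H \<sigma> x"
  unfolding val_sigma_eq_play_value by (rule play_value_bellman[OF H])

lemma val_sigma_Vmax:
  assumes "x \<in> Vmax H"
  shows "val_sigma H \<sigma> x = val_sigma H \<sigma> (\<sigma> x)"
proof -
  have "x \<notin> Vsink H" using assms kinds_disjoint(3)[OF H] by blast
  then show ?thesis using val_sigma_bellman[of \<sigma> x] assms by (simp add: bellman_def next_exp_def)
qed

lemma val_sigma_bellman_not_Vmax:
  "x \<notin> Vmax H \<Longrightarrow> bellman H \<sigma>' (some_best_response H \<sigma>) (val_sigma H \<sigma>) x = val_sigma H \<sigma> x"
  using val_sigma_bellman[of \<sigma> x] bellman_cong_max[of x H \<sigma>' \<sigma>] by simp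

context
  fixes \<sigma> :: "'v \<Rightarrow> 'v"
  assumes \<sigma>: "max_strategy H \<sigma>"
begin

lemma best_response_some_best_response: "best_response H \<sigma> (some_best_response H \<sigma>)"
  unfolding some_best_response_def using best_response_exists[OF H \<sigma>] by (rule someI_ex)

lemma min_strategy_some_best_response: "min_strategy H (some_best_response H \<sigma>)"
  using best_response_some_best_response by (simp add: best_response_def)

lemma val_sigma_le_play_value:
  "min_strategy H \<tau> \<Longrightarrow> x \<in> verts H \<Longrightarrow> val_sigma H \<sigma> x \<le> play_value H \<sigma> \<tau> x"
  using best_response_some_best_response unfolding best_response_def val_sigma_eq_play_value by blast

lemma val_sigma_Vmin_le_succ:
  assumes "x \<in> Vmin H" "y \<in> outn H x"
  shows "val_sigma H \<sigma> x \<le> val_sigma H \<sigma> y"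
proof -
  have "total_value H \<sigma> (some_best_response H \<sigma>) \<le> total_value H \<sigma> \<tau>" if "min_strategy H \<tau>" for \<tau>
    unfolding total_value_def val_sigma_eq_play_value[symmetric]
    using val_sigma_le_play_value[OF that] by (intro sum_mono)
  from min_total_value_Vmin_le_succ[OF H \<sigma> min_strategy_some_best_response this assms] show ?thesis
    by (simp add: val_sigma_eq_play_value)
qed

lemma val_sigma_subsolution:
  assumes \<tau>: "min_strategy H \<tau>" and z: "z \<in> verts H"
    and max_le: "z \<in> Vmax H \<Longrightarrow> val_sigma H \<sigma> z \<le> val_sigma H \<sigma> (\<sigma>' z)"
  shows "val_sigma H \<sigma> z \<le> bellman H \<sigma>' \<tau> (val_sigma H \<sigma>) z"
proof -
  consider "z \<in> Vmax H" | "z \<in> Vmin H" | "z \<notin> Vmax H" "z \<notin> Vmin H" by blast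
  then show ?thesis
  proof cases
    case 1
    then show ?thesis using max_le kinds_disjoint(3)[OF H] by (auto simp: bellman_def next_exp_def)
  next
    case 2
    moreover have "\<tau> z \<in> outn H z" using \<tau> 2 by (simp add: min_strategy_def outn_def)
    ultimately show ?thesis
      using val_sigma_Vmin_le_succ kinds_disjoint(1,5)[OF H] by (auto simp: bellman_def next_exp_def)
  next
    case 3
    then show ?thesis
      using val_sigma_bellman[of \<sigma> z] bellman_cong_min[of z H \<tau> "some_best_response H \<sigma>"]
        bellman_cong_max[of z H \<sigma>' \<sigma>] by simp
  qed
qed

text \<open>On the argmax of \<open>v\<^sub>\<sigma>\<close> over a sink-free closed set no switch
  can happen, so that set is closed under \<open>\<sigma>\<close> as well, where \<open>v\<^sub>\<sigma>\<close> vanishes.\<close>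
lemma val_sigma_le_play_value_improving_switch:
  assumes \<sigma>': "max_strategy H \<sigma>'"
    and improving: "\<And>z. z \<in> Vmax H \<Longrightarrow> \<sigma>' z = \<sigma> z \<or> val_sigma H \<sigma> z < val_sigma H \<sigma> (\<sigma>' z)"
    and \<tau>: "min_strategy H \<tau>" and x: "x \<in> verts H"
  shows "val_sigma H \<sigma> x \<le> play_value H \<sigma>' \<tau> x"
proof -
  let ?v = "val_sigma H \<sigma>"
  have sub: "?v z \<le> bellman H \<sigma>' \<tau> ?v z" if "z \<in> verts H" for z
    using val_sigma_subsolution[OF \<tau> that] improving val_sigma_Vmax by fastforce
  show ?thesis
  proof (rule subsolution_le_play_value[OF H \<sigma>' \<tau> sub _ x])
    fix C assume C: "C \<noteq> {}" "play_closed H \<sigma>' \<tau> C" "C \<inter> Vsink H = {}"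
    define D where "D = {z \<in> C. ?v z = Max (?v ` C)}"
    have "?v z \<le> next_exp H \<sigma>' \<tau> ?v z" if "z \<in> C" "z \<notin> Vsink H" for z
      using sub[of z] that C(2) by (auto simp: play_closed_def bellman_def)
    with argmax_play_closed[OF H C(2,1)] have D: "D \<noteq> {}" "play_closed H \<sigma>' \<tau> D"
      unfolding D_def by blast+
    have "moves H \<sigma> \<tau> z = moves H \<sigma>' \<tau> z" if z: "z \<in> D" "z \<notin> Vsink H" for z
    proof (cases "z \<in> Vmax H \<and> \<sigma>' z \<noteq> \<sigma> z")
      case True
      have "moves H \<sigma>' \<tau> z \<subseteq> D" using D(2) z by (auto simp: play_closed_def)
      then have "\<sigma>' z \<in> D" using True by (simp add: moves_def)
      then show ?thesis using True improving[of z] z by (auto simp: D_def)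
    qed (auto simp: moves_def)
    then have D_closed: "play_closed H \<sigma> \<tau> D" using D(2) by (simp add: play_closed_def)
    obtain z where z: "z \<in> D" using D(1) by blast
    have "?v z \<le> play_value H \<sigma> \<tau> z"
      using z D_closed by (intro val_sigma_le_play_value[OF \<tau>]) (auto simp: play_closed_def)
    also have "\<dots> = 0"
      using C(3) by (intro play_value_play_closed[OF H D_closed _ z]) (auto simp: D_def)
    finally show "\<exists>z\<in>C. ?v z \<le> 0" using z by (auto simp: D_def intro!: bexI[of _ z])
  qed
qed

end

lemma optimal_imp_locally_optimal:
  assumes opt: "optimal H \<sigma>"
  shows "locally_optimal H \<sigma>"
  unfolding locally_optimal_def
proof (intro ballI)
  let ?v = "val_sigma H \<sigma>"
  fix x y assume x: "x \<in> Vmax H" and y: "y \<in> outn H x"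
  show "?v y \<le> ?v x"
  proof (rule ccontr)
    define \<sigma>' where "\<sigma>' = \<sigma>(x := y)"
    assume lt: "\<not> ?v y \<le> ?v x"
    then have improving: "\<sigma>' z = \<sigma> z \<or> ?v z < ?v (\<sigma>' z)" for z by (auto simp: \<sigma>'_def)
    have \<sigma>: "max_strategy H \<sigma>" using opt by (simp add: optimal_def)
    have \<sigma>': "max_strategy H \<sigma>'" using \<sigma> y by (auto simp: max_strategy_def \<sigma>'_def outn_def)
    have "?v y \<le> val_sigma H \<sigma>' y"
      using val_sigma_le_play_value_improving_switch[OF \<sigma> \<sigma>' improving]
        min_strategy_some_best_response[OF \<sigma>'] outn_subset_verts[OF H] y
      by (auto simp: val_sigma_eq_play_value)
    also have "\<dots> = val_sigma H \<sigma>' x" using val_sigma_Vmax[OF x, of \<sigma>'] by (simp add: \<sigma>'_def)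
    also have "\<dots> \<le> ?v x" using opt \<sigma>' x by (auto simp: optimal_def verts_def)
    finally show False using lt by simp
  qed
qed

lemma locally_optimal_imp_optimal:
  assumes \<sigma>: "max_strategy H \<sigma>" and loc: "locally_optimal H \<sigma>"
  shows "optimal H \<sigma>"
  unfolding optimal_def
proof (intro conjI \<sigma> allI impI ballI)
  let ?v = "val_sigma H \<sigma>" and ?\<tau> = "some_best_response H \<sigma>"
  fix \<sigma>' x assume \<sigma>': "max_strategy H \<sigma>'" and x: "x \<in> verts H"
  have "val_sigma H \<sigma>' x \<le> play_value H \<sigma>' ?\<tau> x"
    by (rule val_sigma_le_play_value[OF \<sigma>' min_strategy_some_best_response[OF \<sigma>] x])
  also have "\<dots> \<le> ?v x"
  proof (rule play_value_le_supersolution[OF H])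
    show "0 \<le> ?v z" for z using val_sigma_bounds by blast
    show "bellman H \<sigma>' ?\<tau> ?v z \<le> ?v z" for z
    proof (cases "z \<in> Vmax H")
      case True
      then show ?thesis using loc \<sigma>' kinds_disjoint(3)[OF H]
        by (auto simp: bellman_def next_exp_def locally_optimal_def max_strategy_def outn_def)
    qed (simp add: val_sigma_bellman_not_Vmax)
  qed
  finally show "val_sigma H \<sigma>' x \<le> ?v x" .
qed

lemma optimal_iff_locally_optimal:
  "max_strategy H \<sigma> \<Longrightarrow> optimal H \<sigma> \<longleftrightarrow> locally_optimal H \<sigma>"
  using optimal_imp_locally_optimal locally_optimal_imp_optimal by blast

end

section \<open>The transformed game\<close>

definition cut_target :: "('v, 'a) ssg_scheme \<Rightarrow> ('v \<times> 'v) set \<Rightarrow> 'v \<Rightarrow> 'v \<Rightarrow> 'v + ('v \<times> 'v)" where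
  "cut_target G A x y = (if (x, y) \<in> eff_arcs G A then Inr (x, y) else Inl y)"

text \<open>The vertex of \<open>G\<close> that a vertex of \<open>G[A,\<sigma>]\<close> stands for: the new sink \<open>s\<^sub>(\<^sub>x\<^sub>,\<^sub>y\<^sub>)\<close>
  stands for \<open>y\<close>, whose value \<open>v\<^sub>\<sigma>(y)\<close> it carries.\<close>
definition orig_vertex :: "'v + ('v \<times> 'v) \<Rightarrow> 'v" where
  "orig_vertex z = (case z of Inl y \<Rightarrow> y | Inr (_, y) \<Rightarrow> y)"

lemma sum_image_mem_iff [simp]:
  "Inl x \<in> Inl ` S \<longleftrightarrow> x \<in> S" "Inr e \<in> Inr ` T \<longleftrightarrow> e \<in> T"
  "Inl x \<notin> Inr ` T" "Inr e \<notin> Inl ` S"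
  by auto

lemma orig_vertex_simps [simp]:
  "orig_vertex (Inl y) = y" "orig_vertex (Inr (x, y)) = y" "orig_vertex (cut_target G A x y) = y"
  by (simp_all add: orig_vertex_def cut_target_def)

lemma inj_cut_target: "inj (cut_target G A x)"
  by (auto simp: inj_def cut_target_def split: if_splits)

lemma lift_strategy_Inl [simp]: "lift_strategy G A \<rho> (Inl x) = cut_target G A x (\<rho> x)"
  by (simp add: lift_strategy_def cut_target_def)

lemma transform_simps [simp]:
  "Vmax (transform G A \<sigma>) = Inl ` Vmax G"
  "Vmin (transform G A \<sigma>) = Inl ` Vmin G"
  "Vrand (transform G A \<sigma>) = Inl ` Vrand G"
  "Vsink (transform G A \<sigma>) = Inl ` Vsink G \<union> Inr ` eff_arcs G A"
  "sval (transform G A \<sigma>) (Inl s) = sval G s"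
  "sval (transform G A \<sigma>) (Inr (x, y)) = val_sigma G \<sigma> y"
  "prob (transform G A \<sigma>) (Inl x) (cut_target G A x y) = prob G x y"
  by (simp_all add: transform_def Let_def cut_target_def)

lemma verts_transform: "verts (transform G A \<sigma>) = Inl ` verts G \<union> Inr ` eff_arcs G A"
  unfolding verts_def by auto

lemma arcs_transform: "arcs (transform G A \<sigma>) =
    {(Inl x, Inl y) | x y. (x, y) \<in> arcs G - eff_arcs G A}
    \<union> {(Inl x, Inr (x, y)) | x y. (x, y) \<in> eff_arcs G A}
    \<union> {(Inr e, Inr e) | e. e \<in> eff_arcs G A}"
  by (simp add: transform_def Let_def)

lemma outn_transform_Inr: "outn (transform G A \<sigma>) (Inr e) = (if e \<in> eff_arcs G A then {Inr e} else {})"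
  unfolding outn_def arcs_transform by (cases e) auto

lemma outn_transform_Inl:
  "A \<subseteq> arcs G \<Longrightarrow> outn (transform G A \<sigma>) (Inl x) = cut_target G A x ` outn G x"
  unfolding outn_def arcs_transform cut_target_def eff_arcs_def by (auto simp: image_iff)

lemma sum_outn_transform_Inl:
  assumes "A \<subseteq> arcs G"
  shows "(\<Sum>z \<in> outn (transform G A \<sigma>) (Inl x). prob (transform G A \<sigma>) (Inl x) z * f z) =
         (\<Sum>y \<in> outn G x. prob G x y * f (cut_target G A x y))"
  unfolding outn_transform_Inl[OF assms]
  by (simp add: sum.reindex[OF inj_on_subset[OF inj_cut_target subset_UNIV]])

lemma wf_game_transform:
  assumes G: "wf_game G" and A: "A \<subseteq> arcs G"
  shows "wf_game (transform G A \<sigma>)"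
proof -
  let ?G = "transform G A \<sigma>" and ?A = "eff_arcs G A"
  have A_verts: "?A \<subseteq> verts G \<times> verts G"
    using A arcs_subset_verts[OF G] by (auto simp: eff_arcs_def)
  then have "finite ?A" using finite_verts[OF G] by (meson finite_SigmaI finite_subset)
  then have "finite (verts ?G)" using finite_verts[OF G] by (simp add: verts_transform)
  moreover have "arcs ?G \<subseteq> verts ?G \<times> verts ?G"
    unfolding arcs_transform verts_transform using arcs_subset_verts[OF G] A_verts by blast
  moreover have "outn ?G z \<noteq> {}" if "z \<in> verts ?G - Vsink ?G" for z
    using that outn_nonempty[OF G] by (auto simp: verts_transform outn_transform_Inl[OF A])
  moreover have "outn ?G z = {z}" if "z \<in> Vsink ?G" for z
    using that outn_sink[OF G]
    by (auto simp: outn_transform_Inl[OF A] outn_transform_Inr cut_target_def eff_arcs_def)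
  moreover have "(\<forall>y \<in> outn ?G z. prob ?G z y > 0) \<and> (\<Sum>y \<in> outn ?G z. prob ?G z y) = 1"
    if "z \<in> Vrand ?G" for z
    using that prob_pos[OF G] sum_prob[OF G] sum_outn_transform_Inl[OF A, of \<sigma> _ "\<lambda>_. 1"]
    by (auto simp: outn_transform_Inl[OF A])
  moreover have "0 \<le> sval ?G s \<and> sval ?G s \<le> 1" if "s \<in> Vsink ?G" for s
    using that sval_bounds[OF G] val_sigma_bounds[OF G] by auto
  ultimately show ?thesis
    using kinds_disjoint[OF G] G by (auto simp: wf_game_def)
qed

context
  fixes G :: "('v, 'a) ssg_scheme" and A :: "('v \<times> 'v) set" and \<sigma> :: "'v \<Rightarrow> 'v"
  assumes G: "wf_game G" and A: "A \<subseteq> arcs G"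
begin

lemma arc_transform_cut_target:
  "(x, y) \<in> arcs G \<Longrightarrow> (Inl x, cut_target G A x y) \<in> arcs (transform G A \<sigma>)"
  using outn_transform_Inl[OF A, of \<sigma> x] by (auto simp: outn_def)

lemma max_strategy_lift: "max_strategy G \<rho> \<Longrightarrow> max_strategy (transform G A \<sigma>) (lift_strategy G A \<rho>)"
  using arc_transform_cut_target by (auto simp: max_strategy_def)

lemma min_strategy_lift: "min_strategy G \<rho> \<Longrightarrow> min_strategy (transform G A \<sigma>) (lift_strategy G A \<rho>)"
  using arc_transform_cut_target by (auto simp: min_strategy_def)

lemma min_strategy_transform_Inl:
  assumes "min_strategy (transform G A \<sigma>) \<tau>" "x \<in> Vmin G"
  shows "\<tau> (Inl x) = cut_target G A x (orig_vertex (\<tau> (Inl x)))"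
    and "(x, orig_vertex (\<tau> (Inl x))) \<in> arcs G"
proof -
  have "\<tau> (Inl x) \<in> outn (transform G A \<sigma>) (Inl x)"
    using assms by (auto simp: min_strategy_def outn_def)
  then obtain y where "y \<in> outn G x" "\<tau> (Inl x) = cut_target G A x y"
    unfolding outn_transform_Inl[OF A] by blast
  then show "\<tau> (Inl x) = cut_target G A x (orig_vertex (\<tau> (Inl x)))"
    and "(x, orig_vertex (\<tau> (Inl x))) \<in> arcs G" by (simp_all add: outn_def)
qed

lemma min_strategy_transform_proj:
  "min_strategy (transform G A \<sigma>) \<tau> \<Longrightarrow> min_strategy G (\<lambda>x. orig_vertex (\<tau> (Inl x)))"
  using min_strategy_transform_Inl(2) by (auto simp: min_strategy_def)

context
  fixes \<rho> \<tau> :: "'v + ('v \<times> 'v) \<Rightarrow> 'v + ('v \<times> 'v)" and \<sigma>\<^sub>1 \<tau>\<^sub>1 :: "'v \<Rightarrow> 'v" and x :: 'v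
  assumes \<rho>: "x \<in> Vmax G \<Longrightarrow> \<rho> (Inl x) = cut_target G A x (\<sigma>\<^sub>1 x)"
    and \<tau>: "x \<in> Vmin G \<Longrightarrow> \<tau> (Inl x) = cut_target G A x (\<tau>\<^sub>1 x)"
begin

lemma bellman_transform_Inl:
  "bellman (transform G A \<sigma>) \<rho> \<tau> (f \<circ> orig_vertex) (Inl x) = bellman G \<sigma>\<^sub>1 \<tau>\<^sub>1 f x"
  using \<rho> \<tau> by (simp add: bellman_def next_exp_def sum_outn_transform_Inl[OF A])

lemma moves_transform_Inl:
  "moves (transform G A \<sigma>) \<rho> \<tau> (Inl x) = cut_target G A x ` moves G \<sigma>\<^sub>1 \<tau>\<^sub>1 x"
  using \<rho> \<tau> by (simp add: moves_def outn_transform_Inl[OF A])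

end

lemma bellman_transform_Inr:
  "bellman (transform G A \<sigma>) \<rho> \<tau> g (Inr (x, y)) = (if (x, y) \<in> eff_arcs G A then val_sigma G \<sigma> y else 0)"
  by (simp add: bellman_def next_exp_def outn_transform_Inr)

lemma val_sigma_nonpos_on_closed_transform:
  assumes \<sigma>: "max_strategy G \<sigma>" and \<tau>: "min_strategy (transform G A \<sigma>) \<tau>"
    and C: "C \<noteq> {}" "play_closed (transform G A \<sigma>) (lift_strategy G A \<sigma>) \<tau> C"
      "C \<inter> Vsink (transform G A \<sigma>) = {}"
  shows "\<exists>z\<in>C. val_sigma G \<sigma> (orig_vertex z) \<le> 0"
proof -
  define \<tau>\<^sub>1 where "\<tau>\<^sub>1 = (\<lambda>x. orig_vertex (\<tau> (Inl x)))"
  define D where "D = {x. Inl x \<in> C}"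
  have C_Inl: "C \<subseteq> Inl ` D"
    using C(2,3) by (force simp: D_def play_closed_def verts_transform)
  have cut_in_D: "y \<in> D" if "cut_target G A x y \<in> C" for x y
    using that C(3) by (auto simp: D_def cut_target_def split: if_splits)
  have D_closed: "play_closed G \<sigma> \<tau>\<^sub>1 D"
    unfolding play_closed_def
  proof (intro conjI ballI subsetI)
    show "x \<in> verts G" if "x \<in> D" for x
      using that C(2) by (auto simp: D_def play_closed_def verts_transform)
    fix x y assume x: "x \<in> D - Vsink G" and y: "y \<in> moves G \<sigma> \<tau>\<^sub>1 x"
    have "moves (transform G A \<sigma>) (lift_strategy G A \<sigma>) \<tau> (Inl x) \<subseteq> C"
      using x C(2) by (auto simp: D_def play_closed_def)
    then have "cut_target G A x y \<in> C"
      using y min_strategy_transform_Inl(1)[OF \<tau>]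
      by (subst (asm) moves_transform_Inl[where \<sigma>\<^sub>1 = \<sigma> and \<tau>\<^sub>1 = \<tau>\<^sub>1]) (auto simp: \<tau>\<^sub>1_def)
    then show "y \<in> D" by (rule cut_in_D)
  qed
  obtain x where x: "x \<in> D" using C(1) C_Inl by blast
  have "val_sigma G \<sigma> x \<le> play_value G \<sigma> \<tau>\<^sub>1 x"
    using x D_closed min_strategy_transform_proj[OF \<tau>]
    by (intro val_sigma_le_play_value[OF G \<sigma>]) (auto simp: play_closed_def \<tau>\<^sub>1_def)
  also have "\<dots> = 0"
    using C(3) by (intro play_value_play_closed[OF G D_closed _ x]) (auto simp: D_def)
  finally show ?thesis using x by (auto simp: D_def intro!: bexI[of _ "Inl x"])
qed

lemma val_sigma_transform_le:
  assumes \<sigma>: "max_strategy G \<sigma>" and z: "z \<in> verts (transform G A \<sigma>)"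
  shows "val_sigma (transform G A \<sigma>) (lift_strategy G A \<sigma>) z \<le> val_sigma G \<sigma> (orig_vertex z)"
proof -
  let ?G = "transform G A \<sigma>" and ?\<sigma> = "lift_strategy G A \<sigma>" and ?v = "val_sigma G \<sigma>"
  let ?\<tau> = "lift_strategy G A (some_best_response G \<sigma>)"
  have G': "wf_game ?G" by (rule wf_game_transform[OF G A])
  have "val_sigma ?G ?\<sigma> z \<le> play_value ?G ?\<sigma> ?\<tau> z"
    using min_strategy_some_best_response[OF G \<sigma>]
    by (intro val_sigma_le_play_value[OF G' max_strategy_lift[OF \<sigma>] _ z] min_strategy_lift)
  also have "\<dots> \<le> (?v \<circ> orig_vertex) z"
  proof (rule play_value_le_supersolution[OF G'])
    show "0 \<le> (?v \<circ> orig_vertex) w" for w using val_sigma_bounds[OF G] by simp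
    show "bellman ?G ?\<sigma> ?\<tau> (?v \<circ> orig_vertex) w \<le> (?v \<circ> orig_vertex) w" for w
      using val_sigma_bellman[OF G] val_sigma_bounds[OF G]
      by (cases w) (auto simp: bellman_transform_Inl bellman_transform_Inr)
  qed
  finally show ?thesis by simp
qed

lemma val_sigma_transform_ge:
  assumes \<sigma>: "max_strategy G \<sigma>" and z: "z \<in> verts (transform G A \<sigma>)"
  shows "val_sigma G \<sigma> (orig_vertex z) \<le> val_sigma (transform G A \<sigma>) (lift_strategy G A \<sigma>) z"
proof -
  let ?G = "transform G A \<sigma>" and ?\<sigma> = "lift_strategy G A \<sigma>" and ?v = "val_sigma G \<sigma>"
  let ?\<tau> = "some_best_response ?G ?\<sigma>"
  have G': "wf_game ?G" by (rule wf_game_transform[OF G A])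
  have \<sigma>': "max_strategy ?G ?\<sigma>" by (rule max_strategy_lift[OF \<sigma>])
  have \<tau>: "min_strategy ?G ?\<tau>" by (rule min_strategy_some_best_response[OF G' \<sigma>'])
  have "(?v \<circ> orig_vertex) z \<le> play_value ?G ?\<sigma> ?\<tau> z"
  proof (rule subsolution_le_play_value[OF G' \<sigma>' \<tau> _ _ z])
    fix w assume w: "w \<in> verts ?G"
    show "(?v \<circ> orig_vertex) w \<le> bellman ?G ?\<sigma> ?\<tau> (?v \<circ> orig_vertex) w"
    proof (cases w)
      case (Inl x)
      have "?v x \<le> bellman G \<sigma> (\<lambda>x. orig_vertex (?\<tau> (Inl x))) ?v x"
        using w Inl val_sigma_Vmax[OF G]
        by (intro val_sigma_subsolution[OF G \<sigma> min_strategy_transform_proj[OF \<tau>]])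
          (auto simp: verts_transform)
      also have "\<dots> = bellman ?G ?\<sigma> ?\<tau> (?v \<circ> orig_vertex) (Inl x)"
        by (rule bellman_transform_Inl[symmetric]) (simp, erule min_strategy_transform_Inl(1)[OF \<tau>])
      finally show ?thesis using Inl by simp
    next
      case (Inr e)
      then show ?thesis using w by (cases e) (auto simp: verts_transform bellman_transform_Inr)
    qed
  qed (use val_sigma_nonpos_on_closed_transform[OF \<sigma> \<tau>] in simp)
  then show ?thesis by (simp add: val_sigma_eq_play_value)
qed

lemma val_sigma_transform:
  "max_strategy G \<sigma> \<Longrightarrow> z \<in> verts (transform G A \<sigma>) \<Longrightarrow>
    val_sigma (transform G A \<sigma>) (lift_strategy G A \<sigma>) z = val_sigma G \<sigma> (orig_vertex z)"
  by (intro antisym val_sigma_transform_le val_sigma_transform_ge)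

lemma locally_optimal_transform_iff:
  assumes \<sigma>: "max_strategy G \<sigma>"
  shows "locally_optimal (transform G A \<sigma>) (lift_strategy G A \<sigma>) \<longleftrightarrow> locally_optimal G \<sigma>"
proof -
  let ?G = "transform G A \<sigma>"
  have "val_sigma ?G (lift_strategy G A \<sigma>) (cut_target G A x y) = val_sigma G \<sigma> y"
    and "val_sigma ?G (lift_strategy G A \<sigma>) (Inl x) = val_sigma G \<sigma> x"
    if "x \<in> Vmax G" "y \<in> outn G x" for x y
  proof -
    have "cut_target G A x y \<in> outn ?G (Inl x)" using that(2) by (simp add: outn_transform_Inl[OF A])
    then have "cut_target G A x y \<in> verts ?G" using outn_subset_verts[OF wf_game_transform[OF G A]] by blast
    then show "val_sigma ?G (lift_strategy G A \<sigma>) (cut_target G A x y) = val_sigma G \<sigma> y"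
      using val_sigma_transform[OF \<sigma>] by simp
    show "val_sigma ?G (lift_strategy G A \<sigma>) (Inl x) = val_sigma G \<sigma> x"
      using that(1) val_sigma_transform[OF \<sigma>, of "Inl x"] by (simp add: verts_transform verts_def)
  qed
  then show ?thesis by (auto simp: locally_optimal_def outn_transform_Inl[OF A])
qed

end

theorem lemma14:
  fixes G :: "'v ssg" and A :: "('v \<times> 'v) set" and \<sigma> :: "'v \<Rightarrow> 'v"
  assumes "is_ssg G"
    and "A \<subseteq> arcs G"
    and "max_strategy G \<sigma>"
  shows "optimal G \<sigma> \<longleftrightarrow> optimal (transform G A \<sigma>) (lift_strategy G A \<sigma>)"
proof -
  have G: "wf_game G" by (rule is_ssg_imp_wf_game[OF assms(1)])
  have "optimal G \<sigma> \<longleftrightarrow> locally_optimal G \<sigma>"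
    by (rule optimal_iff_locally_optimal[OF G assms(3)])
  also have "\<dots> \<longleftrightarrow> locally_optimal (transform G A \<sigma>) (lift_strategy G A \<sigma>)"
    by (rule locally_optimal_transform_iff[OF G assms(2,3), symmetric])
  also have "\<dots> \<longleftrightarrow> optimal (transform G A \<sigma>) (lift_strategy G A \<sigma>)"
    using wf_game_transform[OF G assms(2)] max_strategy_lift[OF G assms(2,3)]
    by (rule optimal_iff_locally_optimal[symmetric])
  finally show ?thesis .
qed

end
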